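(* In the setting described in the context, if $\gamma>0$ is a sufficiently small fixed constant, then \[ \frac{1}{(2\pi i)^{d+1}}\int_{\mathcal N\times C^{out}}\frac{G(\mathbf z,t)}{H(\mathbf z,t)}\,\frac{d\mathbf z\,dt}{(z_1\cdots z_d\,t)^{n+1}} = O(\tau^n) \] for some constant $0<\tau<S(\mathbf 1)$.
   Context: Setting: $d\ge1$; $\mathcal{S}\subset\{-1,0,1\}^d\setminus\{\mathbf 0\}$ with positive weights $w_{\mathbf{i}}$, characteristic polynomial $S(\mathbf{z})=\sum_{\mathbf{i}\in\mathcal{S}}w_{\mathbf{i}}\mathbf{z}^{\mathbf{i}}=z_d^{-1}A(\hat{\mathbf{z}})+Q(\hat{\mathbf{z}})+z_dB(\hat{\mathbf{z}})$ with $\hat{\mathbf z}=(z_1,\dots,z_{d-1})$, where $\mathcal{S}$ is symmetric (including weights) over each of the first $d-1$ axes (so $A,Q,B$ are invariant under $z_j\mapsto1/z_j$, $j\le d-1$), $\mathcal{S}$ has a step with $j$th coordinate $+1$ and one with $-1$ for every $j$, and $A(\mathbf 1)=B(\mathbf 1)$ (zero drift). Let $\bar S(\mathbf z)=S(z_1,\dots,z_{d-1},1/z_d)=z_dA(\hat{\mathbf z})+Q(\hat{\mathbf z})+z_d^{-1}B(\hat{\mathbf z})$, $G(\mathbf z,t)=(1+z_1)\cdots(1+z_{d-1})\big(1-tz_1\cdots z_d(Q(\hat{\mathbf z})+2z_dA(\hat{\mathbf z}))\big)$, and $H=H_1H_2H_3$ with $H_1=1-z_d$, $H_2=1-tz_1\cdots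 z_d\bar S(\mathbf z)$, $H_3=1-tz_1\cdots z_d(Q(\hat{\mathbf z})+z_dA(\hat{\mathbf z}))$. Let $C^{out}=\{t\in\mathbb C:|t|=S(\mathbf 1)^{-1}(1+\gamma)\}$. Let $\Gamma$ be the set of $\mathbf w=(\hat{\mathbf w},w_d)$ with $\hat{\mathbf w}\in\{\pm1\}^{d-1}$, $w_d\in\{\pm1,\pm i\}$ and $|S(\hat{\mathbf w},w_d)|=S(\mathbf 1)$. Set $\epsilon=n^{-\alpha}$, $\delta=n^{-\beta}$ with constants satisfying $1/2<\alpha<2\beta$, $\alpha+\beta>1$, $1/3<\beta<1/2$. For $\mathbf w\in\Gamma$ let $\mathcal N_{\mathbf w}=\{\mathbf z\in\mathbb C^d: |z_j|=1\ (1\le j\le d-1),\ |z_d|=1-\epsilon,\ |\arg z_j-\arg w_j|<\delta\ \text{for all } j\}$ and $\mathcal N=\bigcup_{\mathbf w\in\Gamma}\mathcal N_{\mathbf w}$. *)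

theory Defs
  imports "HOL-Analysis.Analysis" "HOL-Library.Landau_Symbols"
begin

text \<open>Points of C^d are functions nat => complex, coordinates 1..d.
  Steps are functions nat => int, coordinates 1..d, zero outside.
  St is the step set, w the weight function.\<close>

definition valid_steps :: "nat \<Rightarrow> (nat \<Rightarrow> int) set \<Rightarrow> ((nat \<Rightarrow> int) \<Rightarrow> real) \<Rightarrow> bool" where
  "valid_steps d St w \<longleftrightarrow> finite St \<and>
     (\<forall>i\<in>St. (\<forall>j\<in>{1..d}. i j \<in> {-1,0,1}) \<and> (\<forall>j. j \<notin> {1..d} \<longrightarrow> i j = 0)
             \<and> i \<noteq> (\<lambda>_. 0) \<and> w i > 0)"

definition symmetric_steps :: "nat \<Rightarrow> (nat \<Rightarrow> int) set \<Rightarrow> ((nat \<Rightarrow> int) \<Rightarrow> real) \<Rightarrow> bool" where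
  "symmetric_steps d St w \<longleftrightarrow>
     (\<forall>j\<in>{1..<d}. \<forall>i\<in>St. i(j := - i j) \<in> St \<and> w (i(j := - i j)) = w i)"

definition all_directions :: "nat \<Rightarrow> (nat \<Rightarrow> int) set \<Rightarrow> bool" where
  "all_directions d St \<longleftrightarrow> (\<forall>j\<in>{1..d}. (\<exists>i\<in>St. i j = 1) \<and> (\<exists>i\<in>St. i j = -1))"

definition charS :: "nat \<Rightarrow> (nat \<Rightarrow> int) set \<Rightarrow> ((nat \<Rightarrow> int) \<Rightarrow> real) \<Rightarrow> (nat \<Rightarrow> complex) \<Rightarrow> complex" where
  "charS d St w z = (\<Sum>i\<in>St. of_real (w i) * (\<Prod>j\<in>{1..d}. z j powi i j))"

definition partS :: "nat \<Rightarrow> (nat \<Rightarrow> int) set \<Rightarrow> ((nat \<Rightarrow> int) \<Rightarrow> real) \<Rightarrow> int \<Rightarrow> (nat \<Rightarrow> complex) \<Rightarrow> complex" where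
  "partS d St w k z = (\<Sum>i\<in>{i\<in>St. i d = k}. of_real (w i) * (\<Prod>j\<in>{1..<d}. z j powi i j))"

definition Apol where "Apol d St w = partS d St w (-1)"
definition Qpol where "Qpol d St w = partS d St w 0"
definition Bpol where "Bpol d St w = partS d St w 1"

definition S1 :: "(nat \<Rightarrow> int) set \<Rightarrow> ((nat \<Rightarrow> int) \<Rightarrow> real) \<Rightarrow> real" where
  "S1 St w = (\<Sum>i\<in>St. w i)"

definition Sbar :: "nat \<Rightarrow> (nat \<Rightarrow> int) set \<Rightarrow> ((nat \<Rightarrow> int) \<Rightarrow> real) \<Rightarrow> (nat \<Rightarrow> complex) \<Rightarrow> complex" where
  "Sbar d St w z = charS d St w (z(d := 1 / z d))"

definition zprod :: "nat \<Rightarrow> (nat \<Rightarrow> complex) \<Rightarrow> complex" where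
  "zprod d z = (\<Prod>j\<in>{1..d}. z j)"

definition Gfun :: "nat \<Rightarrow> (nat \<Rightarrow> int) set \<Rightarrow> ((nat \<Rightarrow> int) \<Rightarrow> real) \<Rightarrow> (nat \<Rightarrow> complex) \<Rightarrow> complex \<Rightarrow> complex" where
  "Gfun d St w z t = (\<Prod>j\<in>{1..<d}. 1 + z j) *
     (1 - t * zprod d z * (Qpol d St w z + 2 * z d * Apol d St w z))"

definition Hfun :: "nat \<Rightarrow> (nat \<Rightarrow> int) set \<Rightarrow> ((nat \<Rightarrow> int) \<Rightarrow> real) \<Rightarrow> (nat \<Rightarrow> complex) \<Rightarrow> complex \<Rightarrow> complex" where
  "Hfun d St w z t = (1 - z d) * (1 - t * zprod d z * Sbar d St w z) *
     (1 - t * zprod d z * (Qpol d St w z + z d * Apol d St w z))"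

definition Gam :: "nat \<Rightarrow> (nat \<Rightarrow> int) set \<Rightarrow> ((nat \<Rightarrow> int) \<Rightarrow> real) \<Rightarrow> (nat \<Rightarrow> complex) set" where
  "Gam d St w = {v. (\<forall>j\<in>{1..<d}. v j \<in> {1, -1}) \<and> v d \<in> {1, -1, \<i>, -\<i>}
                   \<and> (\<forall>j. j \<notin> {1..d} \<longrightarrow> v j = 0)
                   \<and> cmod (charS d St w v) = S1 St w}"

text \<open>Parametrisation: theta 0 is the argument of t, theta j (1 <= j <= d) the argument of z_j.\<close>
definition zpt :: "nat \<Rightarrow> real \<Rightarrow> (nat \<Rightarrow> real) \<Rightarrow> nat \<Rightarrow> complex" where
  "zpt d eps \<theta> j = (if j = d then complex_of_real (1 - eps) else 1) * cis (\<theta> j)"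

definition param_dom :: "nat \<Rightarrow> (nat \<Rightarrow> int) set \<Rightarrow> ((nat \<Rightarrow> int) \<Rightarrow> real) \<Rightarrow> real \<Rightarrow> (nat \<Rightarrow> real) set" where
  "param_dom d St w delta = {\<theta>. \<theta> 0 \<in> {-pi<..pi} \<and>
       (\<exists>v\<in>Gam d St w. \<forall>j\<in>{1..d}. \<bar>\<theta> j - Arg (v j)\<bar> < delta)}"

text \<open>The integral (1/(2 pi i)^(d+1)) int_{N x C^out} G/H dz dt / (z_1...z_d t)^(n+1),
  with eps = n^(-alpha), delta = n^(-beta), |t| = (1+gamma)/S(1); written through the
  standard parametrisation dz_j = i z_j d theta_j, dt = i t d phi.\<close>
definition the_integral :: "nat \<Rightarrow> (nat \<Rightarrow> int) set \<Rightarrow> ((nat \<Rightarrow> int) \<Rightarrow> real) \<Rightarrow> real \<Rightarrow> real \<Rightarrow> real \<Rightarrow> nat \<Rightarrow> complex" where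
  "the_integral d St w \<alpha> \<beta> \<gamma> n =
     (let eps = real n powr (-\<alpha>); delta = real n powr (-\<beta>);
          R = (1 + \<gamma>) / S1 St w
      in (1 / (2 * pi * \<i>) ^ (d + 1)) *
         (LINT \<theta> : param_dom d St w delta | PiM {0..d} (\<lambda>_. lborel).
            (let z = zpt d eps \<theta>; t = complex_of_real R * cis (\<theta> 0)
             in Gfun d St w z t / Hfun d St w z t / (zprod d z * t) ^ (n + 1)
                * (\<Prod>j\<in>{1..d}. \<i> * z j) * (\<i> * t))))"

end

theory Submission
  imports Defs "HOL-Real_Asymp.Real_Asymp"
begin

(* A crude bound suffices.  Put R = (1 + gamma) / S(1), so that |z_1 ... z_d t| = (1 - eps) R on
   N x C^out, and bound the three factors of H from below: |H_1| >= eps since |z_d| = 1 - eps;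
   replacing z_d by 1/z_d moves a point of N_w to within O(eps + delta) of conj w, where |S| = S(1),
   so |t z_1 ... z_d Sbar(z)| >= (1 + gamma)(1 - O(eps + delta)) > 1 + gamma/2 and |H_2| >= gamma/2;
   finally |H_3| >= 1 - R (A(1) + Q(1)) > 0 as soon as gamma < B(1)/S(1).  As N x C^out lies in a
   box of bounded volume, the integral is O(eps^-1 ((1 - eps) R)^-n) = O(n (S(1)/(1 + gamma/2))^n),
   hence O(tau^n) with tau = S(1)/(1 + gamma/4). *)

lemma norm_cis_diff_le: "norm (cis a - cis b) \<le> 2 * \<bar>a - b\<bar>"
proof -
  have "\<bar>cos a - cos b\<bar> = 2 * \<bar>sin ((a + b) / 2)\<bar> * \<bar>sin ((b - a) / 2)\<bar>"
    by (simp add: cos_diff_cos abs_mult)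
  also have "\<dots> \<le> 2 * 1 * \<bar>(b - a) / 2\<bar>"
    by (intro mult_mono abs_sin_x_le_abs_x) auto
  finally have cos: "\<bar>cos a - cos b\<bar> \<le> \<bar>a - b\<bar>" by simp
  have "\<bar>sin a - sin b\<bar> = 2 * \<bar>sin ((a - b) / 2)\<bar> * \<bar>cos ((a + b) / 2)\<bar>"
    by (simp add: sin_diff_sin abs_mult)
  also have "\<dots> \<le> 2 * \<bar>(a - b) / 2\<bar> * 1"
    by (intro mult_mono abs_sin_x_le_abs_x) auto
  finally have sin: "\<bar>sin a - sin b\<bar> \<le> \<bar>a - b\<bar>" by simp
  show ?thesis
    using cmod_le[of "cis a - cis b"] cos sin by simp
qed

lemma norm_powi_diff_le:
  fixes a b :: complex and k :: int
  assumes "norm b = 1" "norm (a - b) \<le> r" "r \<le> 1/2" "k \<in> {-1, 0, 1}"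
  shows "norm (a powi k) \<le> 2" "norm (a powi k - b powi k) \<le> 2 * r"
proof -
  have r0: "0 \<le> r" using assms(2) norm_ge_zero order_trans by blast
  have a_ge: "norm a \<ge> 1/2" and a_le: "norm a \<le> 3/2"
    using assms(1-3) norm_triangle_ineq2[of a b] norm_triangle_ineq3[of a b] by auto
  have "norm (a powi k) \<le> 2 \<and> norm (a powi k - b powi k) \<le> 2 * r"
  proof -
    consider "k = -1" | "k = 0" | "k = 1" using assms(4) by auto
    then show ?thesis
    proof cases
      case 1
      have inv: "norm (inverse a) \<le> 2"
        using le_imp_inverse_le[OF a_ge] by (simp add: norm_inverse)
      have "inverse a - inverse b = - (inverse a * (a - b) * inverse b)"
        using a_ge assms(1) by (intro inverse_diff_inverse) auto
      then have "norm (inverse a - inverse b) = norm (inverse a) * norm (a - b)"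
        using assms(1) by (simp add: norm_mult norm_inverse)
      also have "\<dots> \<le> 2 * r"
        using inv assms(2) r0 by (intro mult_mono) auto
      finally show ?thesis using 1 inv by (simp add: power_int_minus)
    qed (use r0 a_le assms(2) in auto)
  qed
  then show "norm (a powi k) \<le> 2" "norm (a powi k - b powi k) \<le> 2 * r" by auto
qed

lemma norm_prod_powi_unimodular:
  fixes z :: "'a \<Rightarrow> complex"
  assumes "\<forall>j\<in>J. norm (z j) = 1"
  shows "norm (\<Prod>j\<in>J. z j powi k j) = 1"
  using assms by (subst prod_norm[symmetric]) (auto intro!: prod.neutral simp: norm_power_int)

lemma norm_prod_powi_diff_le:
  fixes a b :: "nat \<Rightarrow> complex"
  assumes "finite J" "\<forall>j\<in>J. norm (b j) = 1 \<and> norm (a j - b j) \<le> r \<and> k j \<in> {-1, 0, 1}"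
    and "0 \<le> r" "r \<le> 1/2"
  shows "norm ((\<Prod>j\<in>J. a j powi k j) - (\<Prod>j\<in>J. b j powi k j)) \<le> (2 ^ card J - 1) * (2 * r)"
  using assms(1,2)
proof (induction J rule: finite_induct)
  case (insert x F)
  let ?A = "\<Prod>j\<in>F. a j powi k j" and ?B = "\<Prod>j\<in>F. b j powi k j"
  have ax: "norm (a x powi k x) \<le> 2" "norm (a x powi k x - b x powi k x) \<le> 2 * r"
    using insert.prems assms(4) by (intro norm_powi_diff_le; auto)+
  have B: "norm ?B = 1" using insert.prems by (intro norm_prod_powi_unimodular) auto
  have IH: "norm (?A - ?B) \<le> (2 ^ card F - 1) * (2 * r)" using insert by auto
  have "(\<Prod>j\<in>insert x F. a j powi k j) - (\<Prod>j\<in>insert x F. b j powi k j)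
        = a x powi k x * (?A - ?B) + (a x powi k x - b x powi k x) * ?B"
    using insert.hyps by (simp add: algebra_simps)
  also have "norm \<dots> \<le> norm (a x powi k x) * norm (?A - ?B) + norm (a x powi k x - b x powi k x) * norm ?B"
    by (rule order_trans[OF norm_triangle_ineq]) (simp add: norm_mult)
  also have "\<dots> \<le> 2 * ((2 ^ card F - 1) * (2 * r)) + 2 * r * 1"
    using ax IH B assms(3) by (intro add_mono mult_mono) auto
  also have "\<dots> = (2 ^ card (insert x F) - 1) * (2 * r)"
    using insert.hyps by (simp add: algebra_simps)
  finally show ?case .
qed simp

lemma norm_set_integral_le_measure:
  fixes f :: "'a \<Rightarrow> 'b::{banach, second_countable_topology}"
  assumes K: "K \<in> sets M" "emeasure M K < \<infinity>" and "0 \<le> B"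
    and bound: "\<And>x. x \<in> space M \<Longrightarrow> x \<in> A \<Longrightarrow> x \<in> K \<and> norm (f x) \<le> B"
  shows "norm (LINT x:A|M. f x) \<le> B * measure M K"
proof (cases "integrable M (\<lambda>x. indicator A x *\<^sub>R f x)")
  case False
  then show ?thesis
    using \<open>0 \<le> B\<close> by (simp add: set_lebesgue_integral_def not_integrable_integral_eq)
next
  case True
  have "ennreal (norm (LINT x:A|M. f x)) \<le> (\<integral>\<^sup>+x. norm (indicator A x *\<^sub>R f x) \<partial>M)"
    unfolding set_lebesgue_integral_def using True by (rule integral_norm_bound_ennreal)
  also have "\<dots> \<le> (\<integral>\<^sup>+x. ennreal B * indicator K x \<partial>M)"
  proof (rule nn_integral_mono)
    fix x assume "x \<in> space M"
    then show "ennreal (norm (indicator A x *\<^sub>R f x)) \<le> ennreal B * indicator K x"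
      using bound by (cases "x \<in> A") (auto simp: indicator_def intro!: ennreal_leI)
  qed
  also have "\<dots> = ennreal (B * measure M K)"
    using K \<open>0 \<le> B\<close> by (simp add: nn_integral_cmult_indicator emeasure_eq_ennreal_measure ennreal_mult)
  finally show ?thesis using \<open>0 \<le> B\<close> by (simp add: ennreal_le_iff)
qed

lemma linear_times_geometric_smallo:
  fixes a b :: real
  assumes "0 < a" "a < b"
  shows "(\<lambda>n. real n * a ^ n) \<in> o(\<lambda>n. b ^ n)"
proof (rule smalloI_tendsto)
  have "(\<lambda>n. real n * q ^ n) \<longlonglongrightarrow> 0" if "0 < q" "q < 1" for q :: real
    using that by real_asymp
  from this[of "a / b"] show "(\<lambda>n. real n * a ^ n / b ^ n) \<longlonglongrightarrow> 0"
    using assms by (simp add: power_divide)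
  show "\<forall>\<^sub>F n in sequentially. b ^ n \<noteq> 0" using assms by simp
qed

section \<open>The step polynomial on the torus\<close>

(* layer_weight d St w k is A(1), Q(1), B(1) for k = -1, 0, 1. *)
definition layer_weight :: "nat \<Rightarrow> (nat \<Rightarrow> int) set \<Rightarrow> ((nat \<Rightarrow> int) \<Rightarrow> real) \<Rightarrow> int \<Rightarrow> real" where
  "layer_weight d St w k = (\<Sum>i\<in>{i\<in>St. i d = k}. w i)"

lemma layer_weight_nonneg: "valid_steps d St w \<Longrightarrow> 0 \<le> layer_weight d St w k"
  unfolding layer_weight_def valid_steps_def by (intro sum_nonneg) (simp add: less_imp_le)

lemma layer_weight_pos:
  assumes "valid_steps d St w" "i \<in> St" "i d = k"
  shows "0 < layer_weight d St w k"
proof -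
  have "w i \<le> layer_weight d St w k"
    unfolding layer_weight_def using assms
    by (intro member_le_sum) (auto simp: valid_steps_def less_imp_le)
  moreover have "0 < w i" using assms by (simp add: valid_steps_def)
  ultimately show ?thesis by linarith
qed

lemma S1_eq_sum_layer_weights:
  assumes "valid_steps d St w" "d \<ge> 1"
  shows "S1 St w = layer_weight d St w (-1) + layer_weight d St w 0 + layer_weight d St w 1"
proof -
  have fin: "finite St" using assms(1) by (simp add: valid_steps_def)
  have layer: "i d \<in> {-1, 0, 1}" if "i \<in> St" for i using assms that by (auto simp: valid_steps_def)
  have "layer_weight d St w (-1) + layer_weight d St w 0 + layer_weight d St w 1 =
     (\<Sum>i\<in>St. (if i d = -1 then w i else 0) + (if i d = 0 then w i else 0) + (if i d = 1 then w i else 0))"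
    unfolding layer_weight_def using fin by (simp add: sum.inter_filter sum.distrib)
  also have "\<dots> = (\<Sum>i\<in>St. w i)"
    by (rule sum.cong[OF refl]) (use layer in auto)
  finally show ?thesis by (simp add: S1_def)
qed

lemma norm_partS_le:
  assumes "valid_steps d St w" "\<forall>j\<in>{1..<d}. norm (z j) = 1"
  shows "norm (partS d St w k z) \<le> layer_weight d St w k"
proof -
  have "norm (partS d St w k z) \<le>
      (\<Sum>i\<in>{i\<in>St. i d = k}. norm (of_real (w i) * (\<Prod>j\<in>{1..<d}. z j powi i j)))"
    unfolding partS_def by (rule norm_sum)
  also have "\<dots> = (\<Sum>i\<in>{i\<in>St. i d = k}. w i)"
    using assms by (intro sum.cong) (auto simp: norm_mult norm_prod_powi_unimodular valid_steps_def)
  finally show ?thesis by (simp add: layer_weight_def)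
qed

lemma charS_cnj: "charS d St w (\<lambda>j. cnj (z j)) = cnj (charS d St w z)"
  unfolding charS_def by (simp add: cnj_sum cnj_prod)

lemma norm_charS_diff_le:
  assumes "valid_steps d St w" "\<forall>j\<in>{1..d}. norm (u j) = 1 \<and> norm (z j - u j) \<le> r"
    and "0 \<le> r" "r \<le> 1/2"
  shows "norm (charS d St w z - charS d St w u) \<le> S1 St w * 2 ^ (d + 1) * r"
proof -
  have monomial: "norm ((\<Prod>j\<in>{1..d}. z j powi i j) - (\<Prod>j\<in>{1..d}. u j powi i j)) \<le> 2 ^ (d + 1) * r"
    if "i \<in> St" for i
  proof -
    have "norm ((\<Prod>j\<in>{1..d}. z j powi i j) - (\<Prod>j\<in>{1..d}. u j powi i j)) \<le> (2 ^ d - 1) * (2 * r)"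
      using norm_prod_powi_diff_le[of "{1..d}" u z r i] assms that by (auto simp: valid_steps_def)
    also have "\<dots> \<le> 2 ^ (d + 1) * r" using assms(3) by (simp add: algebra_simps)
    finally show ?thesis .
  qed
  have "charS d St w z - charS d St w u =
      (\<Sum>i\<in>St. of_real (w i) * ((\<Prod>j\<in>{1..d}. z j powi i j) - (\<Prod>j\<in>{1..d}. u j powi i j)))"
    by (simp add: charS_def sum_subtractf[symmetric] algebra_simps)
  also have "norm \<dots> \<le> (\<Sum>i\<in>St. norm (of_real (w i) * ((\<Prod>j\<in>{1..d}. z j powi i j) - (\<Prod>j\<in>{1..d}. u j powi i j))))"
    by (rule norm_sum)
  also have "\<dots> \<le> (\<Sum>i\<in>St. w i * (2 ^ (d + 1) * r))"
  proof (rule sum_mono)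
    fix i assume i: "i \<in> St"
    then have "0 < w i" using assms(1) by (simp add: valid_steps_def)
    then show "norm (of_real (w i) * ((\<Prod>j\<in>{1..d}. z j powi i j) - (\<Prod>j\<in>{1..d}. u j powi i j)))
        \<le> w i * (2 ^ (d + 1) * r)"
      using monomial[OF i] by (simp add: norm_mult)
  qed
  finally show ?thesis by (simp add: S1_def sum_distrib_right mult.assoc)
qed

(* This is where gamma < B(1)/S(1) is needed: it keeps the factor H_3 away from zero on C^out. *)
lemma contraction_below_top_weight:
  assumes "valid_steps d St w" "d \<ge> 1" "0 < \<gamma>" "\<gamma> < layer_weight d St w 1 / S1 St w"
  shows "(1 + \<gamma>) / S1 St w * (layer_weight d St w 0 + layer_weight d St w (-1)) < 1"
proof -
  have S: "S1 St w = layer_weight d St w (-1) + layer_weight d St w 0 + layer_weight d St w 1"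
    by (rule S1_eq_sum_layer_weights[OF assms(1,2)])
  have "S1 St w \<noteq> 0" using assms(3,4) by auto
  moreover have "0 \<le> S1 St w"
    using S layer_weight_nonneg[OF assms(1), of "-1"] layer_weight_nonneg[OF assms(1), of 0]
      layer_weight_nonneg[OF assms(1), of 1] by linarith
  ultimately have "0 < S1 St w" by simp
  then have "\<gamma> * S1 St w < layer_weight d St w 1"
    using assms(4) by (simp add: pos_less_divide_eq)
  moreover have "0 \<le> \<gamma> * layer_weight d St w 1"
    using assms(3) layer_weight_nonneg[OF assms(1)] by simp
  moreover have "(1 + \<gamma>) * (layer_weight d St w 0 + layer_weight d St w (-1))
      = S1 St w + (\<gamma> * S1 St w - layer_weight d St w 1) - \<gamma> * layer_weight d St w 1"
    using S by (simp add: algebra_simps)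
  ultimately have "(1 + \<gamma>) * (layer_weight d St w 0 + layer_weight d St w (-1)) < S1 St w"
    by linarith
  then show ?thesis using \<open>0 < S1 St w\<close> by (simp add: pos_divide_less_eq)
qed

section \<open>The contour near the critical points\<close>

lemma norm_zpt: "\<epsilon> \<le> 1 \<Longrightarrow> norm (zpt d \<epsilon> \<theta> j) = (if j = d then 1 - \<epsilon> else 1)"
  by (simp add: zpt_def norm_mult del: of_real_diff)

lemma norm_zprod_zpt:
  assumes "d \<ge> 1" "\<epsilon> \<le> 1"
  shows "norm (zprod d (zpt d \<epsilon> \<theta>)) = 1 - \<epsilon>"
proof -
  have "norm (zprod d (zpt d \<epsilon> \<theta>)) = (\<Prod>j\<in>{1..d}. if j = d then 1 - \<epsilon> else 1)"
    using assms(2) by (simp add: zprod_def prod_norm[symmetric] norm_zpt)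
  then show ?thesis using assms(1) by (simp add: prod.delta)
qed

lemma param_dom_radius_pos: "\<theta> \<in> param_dom d St w \<delta> \<Longrightarrow> d \<ge> 1 \<Longrightarrow> 0 < \<delta>"
  unfolding param_dom_def by force

lemma Gam_coordinates:
  assumes "v \<in> Gam d St w"
  shows "\<And>j. j \<in> {1..<d} \<Longrightarrow> cnj (v j) = v j"
    and "\<And>j. j \<in> {1..d} \<Longrightarrow> norm (v j) = 1"
proof -
  have torus: "v j \<in> {1, -1}" if "j \<in> {1..<d}" for j
    using assms that by (simp add: Gam_def)
  fix j
  show "j \<in> {1..<d} \<Longrightarrow> cnj (v j) = v j" using torus[of j] by auto
  assume "j \<in> {1..d}"
  then consider "j \<in> {1..<d}" | "j = d" by fastforce
  then show "norm (v j) = 1"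
  proof cases
    case 1 then show ?thesis using torus[OF 1] by auto
  next
    case 2 then show ?thesis using assms by (auto simp: Gam_def)
  qed
qed

lemma norm_charS_cnj_Gam: "v \<in> Gam d St w \<Longrightarrow> norm (charS d St w (\<lambda>j. cnj (v j))) = S1 St w"
  by (simp add: charS_cnj Gam_def)

lemma reflected_zpt_near_cnj_Gam:
  assumes "d \<ge> 1" "v \<in> Gam d St w" "\<forall>j\<in>{1..d}. \<bar>\<theta> j - Arg (v j)\<bar> < \<delta>"
    and "0 < \<epsilon>" "\<epsilon> \<le> 1/2" "j \<in> {1..d}"
  shows "norm (((zpt d \<epsilon> \<theta>)(d := 1 / zpt d \<epsilon> \<theta> d)) j - cnj (v j)) \<le> 2 * \<epsilon> + 2 * \<delta>"
proof -
  have "norm (v j) = 1" using Gam_coordinates(2)[OF assms(2,6)] .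
  then have v: "v j = cis (Arg (v j))"
    by (subst cis_Arg) (auto simp: sgn_div_norm)
  have "\<bar>\<theta> j - Arg (v j)\<bar> < \<delta>" using assms(3,6) by blast
  then have angle: "norm (cis (\<theta> j) - v j) \<le> 2 * \<delta>"
    using norm_cis_diff_le[of "\<theta> j" "Arg (v j)"] v by simp
  then have angle_cnj: "norm (cis (- \<theta> j) - cnj (v j)) \<le> 2 * \<delta>"
    by (metis cis_cnj complex_cnj_diff complex_mod_cnj)
  show ?thesis
  proof (cases "j = d")
    case False
    then have "j \<in> {1..<d}" using assms(6) by simp
    then show ?thesis
      using False angle Gam_coordinates(1)[OF assms(2)] assms(4) by (simp add: zpt_def)
  next
    case True
    have "((zpt d \<epsilon> \<theta>)(d := 1 / zpt d \<epsilon> \<theta> d)) j - cnj (v j)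
        = cis (- \<theta> j) * of_real (\<epsilon> / (1 - \<epsilon>)) + (cis (- \<theta> j) - cnj (v j))"
      using True assms(5) by (simp add: zpt_def field_simps cis_inverse[symmetric])
    also have "norm \<dots> \<le> norm (cis (- \<theta> j) * of_real (\<epsilon> / (1 - \<epsilon>))) + 2 * \<delta>"
      using norm_triangle_ineq angle_cnj by (rule order_trans[OF _ add_left_mono])
    also have "norm (cis (- \<theta> j) * of_real (\<epsilon> / (1 - \<epsilon>))) = \<epsilon> / (1 - \<epsilon>)"
      using assms(4,5) by (simp only: norm_mult norm_cis norm_of_real) simp
    also have "\<epsilon> / (1 - \<epsilon>) \<le> 2 * \<epsilon>"
      using assms(4,5) by (simp add: field_simps)
    finally show ?thesis by simp
  qed
qed

lemma norm_Sbar_zpt_ge: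
  assumes "valid_steps d St w" "d \<ge> 1" "\<theta> \<in> param_dom d St w \<delta>"
    and "0 < \<epsilon>" "2 * \<epsilon> + 2 * \<delta> \<le> 1/2"
  shows "S1 St w * (1 - 2 ^ (d + 1) * (2 * \<epsilon> + 2 * \<delta>)) \<le> norm (Sbar d St w (zpt d \<epsilon> \<theta>))"
proof -
  obtain v where v: "v \<in> Gam d St w" and \<theta>: "\<forall>j\<in>{1..d}. \<bar>\<theta> j - Arg (v j)\<bar> < \<delta>"
    using assms(3) by (auto simp: param_dom_def)
  have "0 \<le> \<delta>" using param_dom_radius_pos[OF assms(3,2)] by simp
  define z' where "z' = (zpt d \<epsilon> \<theta>)(d := 1 / zpt d \<epsilon> \<theta> d)"
  have "norm (charS d St w z' - charS d St w (\<lambda>j. cnj (v j))) \<le> S1 St w * 2 ^ (d + 1) * (2 * \<epsilon> + 2 * \<delta>)"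
    using assms(4,5) \<open>0 \<le> \<delta>\<close> Gam_coordinates(2)[OF v]
      reflected_zpt_near_cnj_Gam[OF assms(2) v \<theta> assms(4)]
    by (intro norm_charS_diff_le[OF assms(1)]) (auto simp: z'_def)
  then show ?thesis
    using norm_charS_cnj_Gam[OF v] norm_triangle_ineq2[of "charS d St w (\<lambda>j. cnj (v j))" "charS d St w z'"]
    by (simp add: Sbar_def z'_def norm_minus_commute algebra_simps)
qed

section \<open>Bounds for the integrand\<close>

lemma norm_Gfun_le:
  assumes "valid_steps d St w" "d \<ge> 1" "0 \<le> \<epsilon>" "\<epsilon> \<le> 1" "0 \<le> R"
  shows "norm (Gfun d St w (zpt d \<epsilon> \<theta>) (of_real R * cis \<phi>)) \<le> 2 ^ (d - 1) * (1 + 2 * R * S1 St w)"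
proof -
  define z where "z = zpt d \<epsilon> \<theta>"
  have torus: "\<forall>j\<in>{1..<d}. norm (z j) = 1" and zd: "norm (z d) \<le> 1"
    using assms(3,4) by (auto simp: z_def norm_zpt)
  have "norm (\<Prod>j\<in>{1..<d}. 1 + z j) \<le> (\<Prod>j\<in>{1..<d}. 2)"
    unfolding prod_norm[symmetric]
  proof (rule prod_mono)
    fix j assume "j \<in> {1..<d}"
    then show "0 \<le> norm (1 + z j) \<and> norm (1 + z j) \<le> 2"
      using torus norm_triangle_ineq[of 1 "z j"] by simp
  qed
  then have factors: "norm (\<Prod>j\<in>{1..<d}. 1 + z j) \<le> 2 ^ (d - 1)" by simp
  have "norm (Qpol d St w z + 2 * z d * Apol d St w z) \<le> norm (Qpol d St w z) + 2 * norm (z d) * norm (Apol d St w z)"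
    by (rule order_trans[OF norm_triangle_ineq]) (simp add: norm_mult)
  also have "\<dots> \<le> layer_weight d St w 0 + 2 * 1 * layer_weight d St w (-1)"
    using norm_partS_le[OF assms(1) torus] zd layer_weight_nonneg[OF assms(1)]
    unfolding Qpol_def Apol_def by (intro add_mono mult_mono) auto
  also have "\<dots> \<le> 2 * S1 St w"
    using S1_eq_sum_layer_weights[OF assms(1,2)] layer_weight_nonneg[OF assms(1)] by fastforce
  finally have "norm (of_real R * cis \<phi> * zprod d z * (Qpol d St w z + 2 * z d * Apol d St w z)) \<le> R * 1 * (2 * S1 St w)"
    unfolding norm_mult using assms norm_zprod_zpt[OF assms(2,4)]
    by (intro mult_mono) (auto simp: z_def)
  then have "norm (1 - of_real R * cis \<phi> * zprod d z * (Qpol d St w z + 2 * z d * Apol d St w z)) \<le> 1 + 2 * R * S1 St w"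
    using norm_triangle_ineq4[of 1 "of_real R * cis \<phi> * zprod d z * (Qpol d St w z + 2 * z d * Apol d St w z)"]
    by simp
  then show ?thesis
    unfolding Gfun_def norm_mult z_def[symmetric] using factors by (intro mult_mono) auto
qed

lemma norm_Hfun_ge:
  assumes "valid_steps d St w" "d \<ge> 1" "\<theta> \<in> param_dom d St w \<delta>"
    and "0 < \<epsilon>" "2 * \<epsilon> + 2 * \<delta> \<le> 1/2" "0 \<le> R" "0 \<le> g"
    and "1 + g \<le> (1 - \<epsilon>) * R * S1 St w * (1 - 2 ^ (d + 1) * (2 * \<epsilon> + 2 * \<delta>))"
    and "R * (layer_weight d St w 0 + layer_weight d St w (-1)) \<le> 1"
  shows "\<epsilon> * g * (1 - R * (layer_weight d St w 0 + layer_weight d St w (-1)))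
    \<le> norm (Hfun d St w (zpt d \<epsilon> \<theta>) (of_real R * cis \<phi>))"
proof -
  define z where "z = zpt d \<epsilon> \<theta>"
  define t where "t = of_real R * cis \<phi>"
  have "\<epsilon> \<le> 1/2" using assms(5) param_dom_radius_pos[OF assms(3,2)] by linarith
  then have torus: "\<forall>j\<in>{1..<d}. norm (z j) = 1" and zd: "norm (z d) = 1 - \<epsilon>"
    by (auto simp: z_def norm_zpt)
  have tz: "norm (t * zprod d z) = (1 - \<epsilon>) * R"
    using norm_zprod_zpt[OF assms(2)] \<open>\<epsilon> \<le> 1/2\<close> assms(6) by (simp add: t_def z_def norm_mult)
  have pole: "\<epsilon> \<le> norm (1 - z d)"
    using norm_triangle_ineq2[of 1 "z d"] zd by simp
  have "1 + g \<le> (1 - \<epsilon>) * R * (S1 St w * (1 - 2 ^ (d + 1) * (2 * \<epsilon> + 2 * \<delta>)))"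
    using assms(8) by (simp add: mult.assoc)
  also have "\<dots> \<le> (1 - \<epsilon>) * R * norm (Sbar d St w z)"
    using norm_Sbar_zpt_ge[OF assms(1-5)] \<open>\<epsilon> \<le> 1/2\<close> assms(6)
    by (intro mult_left_mono) (auto simp: z_def)
  finally have "1 + g \<le> (1 - \<epsilon>) * R * norm (Sbar d St w z)" .
  then have kernel: "g \<le> norm (1 - t * zprod d z * Sbar d St w z)"
    using norm_triangle_ineq2[of "t * zprod d z * Sbar d St w z" 1] tz
    by (simp add: norm_mult norm_minus_commute)
  have "norm (Qpol d St w z + z d * Apol d St w z) \<le> norm (Qpol d St w z) + norm (z d) * norm (Apol d St w z)"
    by (rule order_trans[OF norm_triangle_ineq]) (simp add: norm_mult)
  also have "\<dots> \<le> layer_weight d St w 0 + 1 * layer_weight d St w (-1)"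
    using norm_partS_le[OF assms(1) torus] zd \<open>\<epsilon> \<le> 1/2\<close> assms(4) layer_weight_nonneg[OF assms(1)]
    unfolding Qpol_def Apol_def by (intro add_mono mult_mono) auto
  finally have "norm (t * zprod d z * (Qpol d St w z + z d * Apol d St w z))
      \<le> R * (layer_weight d St w 0 + layer_weight d St w (-1))"
    using tz assms(4,6) \<open>\<epsilon> \<le> 1/2\<close> unfolding norm_mult[of "t * zprod d z"]
    by (intro mult_mono) (auto simp: mult_le_cancel_right2)
  then have boundary: "1 - R * (layer_weight d St w 0 + layer_weight d St w (-1))
      \<le> norm (1 - t * zprod d z * (Qpol d St w z + z d * Apol d St w z))"
    using norm_triangle_ineq2[of 1 "t * zprod d z * (Qpol d St w z + z d * Apol d St w z)"] by simp
  show ?thesis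
    unfolding Hfun_def norm_mult z_def[symmetric] t_def[symmetric]
    using pole kernel boundary assms(4,7,9) by (intro mult_mono) auto
qed

definition cauchy_integrand ::
    "nat \<Rightarrow> (nat \<Rightarrow> int) set \<Rightarrow> ((nat \<Rightarrow> int) \<Rightarrow> real) \<Rightarrow> real \<Rightarrow> real \<Rightarrow> nat \<Rightarrow> (nat \<Rightarrow> real) \<Rightarrow> complex" where
  "cauchy_integrand d St w \<epsilon> R n \<theta> =
     (let z = zpt d \<epsilon> \<theta>; t = complex_of_real R * cis (\<theta> 0)
      in Gfun d St w z t / Hfun d St w z t / (zprod d z * t) ^ (n + 1) * (\<Prod>j\<in>{1..d}. \<i> * z j) * (\<i> * t))"

lemma the_integral_eq:
  "the_integral d St w \<alpha> \<beta> \<gamma> n = 1 / (2 * pi * \<i>) ^ (d + 1) *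
     (LINT \<theta> : param_dom d St w (real n powr - \<beta>) | PiM {0..d} (\<lambda>_. lborel).
        cauchy_integrand d St w (real n powr - \<alpha>) ((1 + \<gamma>) / S1 St w) n \<theta>)"
  unfolding the_integral_def cauchy_integrand_def Let_def ..

lemma norm_cauchy_integrand_le:
  assumes "valid_steps d St w" "d \<ge> 1" "\<theta> \<in> param_dom d St w \<delta>"
    and "0 < \<epsilon>" "2 * \<epsilon> + 2 * \<delta> \<le> 1/2" "0 < R" "0 < g"
    and "1 + g \<le> (1 - \<epsilon>) * R * S1 St w * (1 - 2 ^ (d + 1) * (2 * \<epsilon> + 2 * \<delta>))"
    and "R * (layer_weight d St w 0 + layer_weight d St w (-1)) < 1"
  shows "norm (cauchy_integrand d St w \<epsilon> R n \<theta>) \<le>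
    2 ^ (d - 1) * (1 + 2 * R * S1 St w) / (\<epsilon> * g * (1 - R * (layer_weight d St w 0 + layer_weight d St w (-1))))
      / ((1 - \<epsilon>) * R) ^ n"
proof -
  define z where "z = zpt d \<epsilon> \<theta>"
  define t where "t = of_real R * cis (\<theta> 0)"
  have "\<epsilon> \<le> 1/2" using assms(5) param_dom_radius_pos[OF assms(3,2)] by linarith
  have rho: "norm (zprod d z * t) = (1 - \<epsilon>) * R" and "0 < (1 - \<epsilon>) * R"
    using norm_zprod_zpt[OF assms(2)] \<open>\<epsilon> \<le> 1/2\<close> assms(6) by (simp_all add: t_def z_def norm_mult)
  have differential: "norm ((\<Prod>j\<in>{1..d}. \<i> * z j) * (\<i> * t)) = (1 - \<epsilon>) * R"
    using rho by (simp add: norm_mult prod_norm[symmetric] zprod_def)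
  have G: "norm (Gfun d St w z t) \<le> 2 ^ (d - 1) * (1 + 2 * R * S1 St w)"
    using norm_Gfun_le[OF assms(1,2)] assms(4,6) \<open>\<epsilon> \<le> 1/2\<close> by (simp add: z_def t_def)
  have H: "\<epsilon> * g * (1 - R * (layer_weight d St w 0 + layer_weight d St w (-1))) \<le> norm (Hfun d St w z t)"
    using norm_Hfun_ge[OF assms(1-5)] assms(6-9) by (simp add: z_def t_def)
  have "0 < \<epsilon> * g * (1 - R * (layer_weight d St w 0 + layer_weight d St w (-1)))"
    using assms(4,7,9) by simp
  have "cauchy_integrand d St w \<epsilon> R n \<theta>
      = Gfun d St w z t / Hfun d St w z t / (zprod d z * t) ^ (n + 1) * ((\<Prod>j\<in>{1..d}. \<i> * z j) * (\<i> * t))"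
    by (simp add: cauchy_integrand_def Let_def z_def t_def)
  then have "norm (cauchy_integrand d St w \<epsilon> R n \<theta>)
      = norm (Gfun d St w z t) / norm (Hfun d St w z t) / ((1 - \<epsilon>) * R) ^ (n + 1) * ((1 - \<epsilon>) * R)"
    by (simp only: norm_mult norm_divide norm_power rho[unfolded norm_mult] differential[unfolded norm_mult])
  also have "\<dots> = norm (Gfun d St w z t) / norm (Hfun d St w z t) / ((1 - \<epsilon>) * R) ^ n"
  proof -
    have cancel: "x / p ^ (n + 1) * p = x / p ^ n" if "p \<noteq> 0" for x p :: real
      using that by (simp add: field_simps)
    show ?thesis using \<open>0 < (1 - \<epsilon>) * R\<close> by (intro cancel) linarith
  qed
  also have "\<dots> \<le> 2 ^ (d - 1) * (1 + 2 * R * S1 St w)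
      / (\<epsilon> * g * (1 - R * (layer_weight d St w 0 + layer_weight d St w (-1)))) / ((1 - \<epsilon>) * R) ^ n"
    using G H \<open>0 < (1 - \<epsilon>) * R\<close> \<open>0 < \<epsilon> * g * _\<close> order_trans[OF norm_ge_zero G]
    by (intro divide_right_mono frac_le) auto
  finally show ?thesis .
qed

lemma norm_the_integral_le_integral:
  "norm (the_integral d St w \<alpha> \<beta> \<gamma> n) \<le>
    norm (LINT \<theta> : param_dom d St w (real n powr - \<beta>) | PiM {0..d} (\<lambda>_. lborel).
      cauchy_integrand d St w (real n powr - \<alpha>) ((1 + \<gamma>) / S1 St w) n \<theta>)"
proof -
  have "norm (1 / (2 * pi * \<i>) ^ (d + 1)) = 1 / (2 * pi) ^ (d + 1)"
    by (simp add: norm_divide norm_power norm_mult)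
  also have "\<dots> \<le> 1" using one_le_power[of "2 * pi" "d + 1"] pi_gt3 by simp
  finally show ?thesis
    unfolding the_integral_eq norm_mult by (rule mult_left_le_one_le[OF norm_ge_zero norm_ge_zero])
qed

lemma param_dom_subset_box:
  assumes "\<delta> \<le> 1"
  shows "space (PiM {0..d} (\<lambda>_. lborel)) \<inter> param_dom d St w \<delta> \<subseteq> PiE {0..d} (\<lambda>_. {-5..5::real})"
proof
  fix \<theta> assume \<theta>: "\<theta> \<in> space (PiM {0..d} (\<lambda>_. lborel)) \<inter> param_dom d St w \<delta>"
  then obtain v where v: "\<forall>j\<in>{1..d}. \<bar>\<theta> j - Arg (v j)\<bar> < \<delta>" and "\<theta> 0 \<in> {-pi<..pi}"
    by (auto simp: param_dom_def)
  have "\<theta> j \<in> {-5..5}" if "j \<in> {0..d}" for j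
  proof (cases "j = 0")
    case True then show ?thesis using \<open>\<theta> 0 \<in> {-pi<..pi}\<close> pi_less_4 by auto
  next
    case False
    then have "\<bar>\<theta> j - Arg (v j)\<bar> < \<delta>" using v that by auto
    then show ?thesis using Arg_bounded[of "v j"] pi_less_4 assms by auto
  qed
  then show "\<theta> \<in> PiE {0..d} (\<lambda>_. {-5..5})"
    using \<theta> by (auto simp: space_PiM PiE_iff)
qed

lemma emeasure_PiM_box:
  "emeasure (PiM {0..d} (\<lambda>_. lborel)) (PiE {0..d} (\<lambda>_. {-5..5::real})) = ennreal (10 ^ (d + 1))"
proof -
  interpret product_sigma_finite "\<lambda>_. lborel" by standard
  have "emeasure (PiM {0..d} (\<lambda>_. lborel)) (PiE {0..d} (\<lambda>_. {-5..5::real})) = (\<Prod>i\<in>{0..d}. ennreal 10)"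
    by (subst emeasure_PiM) auto
  also have "\<dots> = ennreal (\<Prod>i\<in>{0..d}. 10)" by (rule prod_ennreal) auto
  finally show ?thesis by simp
qed

lemma norm_the_integral_le:
  assumes "valid_steps d St w" "d \<ge> 1" "0 < S1 St w" "0 < \<gamma>" "n \<ge> 1"
    and \<epsilon>: "\<epsilon> = real n powr - \<alpha>" and \<delta>: "\<delta> = real n powr - \<beta>" and R: "R = (1 + \<gamma>) / S1 St w"
    and "R * (layer_weight d St w 0 + layer_weight d St w (-1)) < 1"
    and "2 * \<epsilon> + 2 * \<delta> \<le> 1/2"
    and "1 + \<gamma> / 2 \<le> (1 + \<gamma>) * (1 - \<epsilon>) * (1 - 2 ^ (d + 1) * (2 * \<epsilon> + 2 * \<delta>))"
  shows "norm (the_integral d St w \<alpha> \<beta> \<gamma> n) \<le> 10 ^ (d + 1) *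
    (2 ^ (d - 1) * (1 + 2 * R * S1 St w) / (\<epsilon> * (\<gamma> / 2) * (1 - R * (layer_weight d St w 0 + layer_weight d St w (-1))))
      / ((1 - \<epsilon>) * R) ^ n)"
    (is "_ \<le> _ * ?B")
proof -
  define M where "M = PiM {0..d} (\<lambda>_. lborel :: real measure)"
  define K where "K = PiE {0..d} (\<lambda>_. {-5..5::real})"
  have "0 < \<epsilon>" "0 < \<delta>" using \<open>n \<ge> 1\<close> by (simp_all add: \<epsilon> \<delta>)
  then have "\<epsilon> \<le> 1/2" "\<delta> \<le> 1" using assms(10) by linarith+
  have "0 < R" "R * S1 St w = 1 + \<gamma>" using assms(3,4) by (simp_all add: R)
  then have rs: "(1 - \<epsilon>) * R * S1 St w = (1 + \<gamma>) * (1 - \<epsilon>)"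
    by (metis mult.assoc mult.commute)
  have pointwise: "norm (cauchy_integrand d St w \<epsilon> R n \<theta>) \<le> ?B" if "\<theta> \<in> param_dom d St w \<delta>" for \<theta>
    using assms(1,2,4,9-11) that \<open>0 < \<epsilon>\<close> \<open>0 < R\<close>
    by (intro norm_cauchy_integrand_le) (auto simp: rs)
  have "0 \<le> ?B" using \<open>0 < \<epsilon>\<close> \<open>\<epsilon> \<le> 1/2\<close> \<open>0 < R\<close> assms(3,4,9)
    by (intro divide_nonneg_pos mult_nonneg_nonneg) auto
  have "norm (LINT \<theta> : param_dom d St w \<delta> | M. cauchy_integrand d St w \<epsilon> R n \<theta>) \<le> ?B * measure M K"
  proof (rule norm_set_integral_le_measure)
    show "K \<in> sets M" unfolding M_def K_def by (intro sets_PiM_I_finite) auto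
    show "emeasure M K < \<infinity>" unfolding M_def K_def emeasure_PiM_box by simp
    fix \<theta> assume "\<theta> \<in> space M" "\<theta> \<in> param_dom d St w \<delta>"
    then show "\<theta> \<in> K \<and> norm (cauchy_integrand d St w \<epsilon> R n \<theta>) \<le> ?B"
      using param_dom_subset_box[OF \<open>\<delta> \<le> 1\<close>] pointwise unfolding M_def K_def by blast
  qed fact
  also have "measure M K = 10 ^ (d + 1)"
    unfolding M_def K_def measure_def emeasure_PiM_box by simp
  finally show ?thesis
    using norm_the_integral_le_integral[of d St w \<alpha> \<beta> \<gamma> n]
    unfolding \<epsilon>[symmetric] \<delta>[symmetric] R[symmetric] M_def[symmetric] by (simp add: mult.commute)
qed

lemma eventually_small_radii:
  fixes \<alpha> \<beta> \<gamma> :: real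
  assumes "0 < \<alpha>" "0 < \<beta>" "0 < \<gamma>"
  shows "\<forall>\<^sub>F n in sequentially. 2 * real n powr - \<alpha> + 2 * real n powr - \<beta> < 1/2 \<and>
    1 + \<gamma> / 2 < (1 + \<gamma>) * (1 - real n powr - \<alpha>) * (1 - 2 ^ (d + 1) * (2 * real n powr - \<alpha> + 2 * real n powr - \<beta>))"
proof -
  have \<epsilon>: "(\<lambda>n. real n powr - \<alpha>) \<longlonglongrightarrow> 0" and \<delta>: "(\<lambda>n. real n powr - \<beta>) \<longlonglongrightarrow> 0"
    using assms by real_asymp+
  have "(\<lambda>n. 2 * real n powr - \<alpha> + 2 * real n powr - \<beta>) \<longlonglongrightarrow> 2 * 0 + 2 * 0"
    using \<epsilon> \<delta> by (intro tendsto_intros)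
  moreover have "(\<lambda>n. (1 + \<gamma>) * (1 - real n powr - \<alpha>) * (1 - 2 ^ (d + 1) * (2 * real n powr - \<alpha> + 2 * real n powr - \<beta>)))
      \<longlonglongrightarrow> (1 + \<gamma>) * (1 - 0) * (1 - 2 ^ (d + 1) * (2 * 0 + 2 * 0))"
    using \<epsilon> \<delta> by (intro tendsto_intros)
  ultimately show ?thesis
    using assms(3) by (intro eventually_conj order_tendstoD) auto
qed

lemma the_integral_bigo:
  assumes "valid_steps d St w" "d \<ge> 1" "0 < S1 St w" "0 < \<gamma>"
    and "(1 + \<gamma>) / S1 St w * (layer_weight d St w 0 + layer_weight d St w (-1)) < 1"
    and "0 < \<alpha>" "\<alpha> \<le> 1" "0 < \<beta>"
  shows "(\<lambda>n. cmod (the_integral d St w \<alpha> \<beta> \<gamma> n)) \<in> O(\<lambda>n. real n * (S1 St w / (1 + \<gamma> / 2)) ^ n)"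
proof -
  define R where "R = (1 + \<gamma>) / S1 St w"
  define c where "c = 1 - R * (layer_weight d St w 0 + layer_weight d St w (-1))"
  define C where "C = 10 ^ (d + 1) * (2 ^ (d - 1) * (1 + 2 * R * S1 St w) / (\<gamma> / 2 * c))"
  have "0 < R" "0 < c" using assms(3-5) by (simp_all add: R_def c_def)
  have "\<forall>\<^sub>F n in sequentially.
      norm (cmod (the_integral d St w \<alpha> \<beta> \<gamma> n)) \<le> C * norm (real n * (S1 St w / (1 + \<gamma> / 2)) ^ n)"
    using eventually_ge_at_top[of 1] eventually_small_radii[OF assms(6,8,4), of d]
  proof eventually_elim
    case (elim n)
    define \<epsilon> where "\<epsilon> = real n powr - \<alpha>"
    define \<delta> where "\<delta> = real n powr - \<beta>"
    have radius: "2 * \<epsilon> + 2 * \<delta> < 1/2"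
      and kernel: "1 + \<gamma> / 2 < (1 + \<gamma>) * (1 - \<epsilon>) * (1 - 2 ^ (d + 1) * (2 * \<epsilon> + 2 * \<delta>))"
      using elim(2) by (simp_all add: \<epsilon>_def \<delta>_def)
    have "0 < \<epsilon>" "0 < \<delta>" using elim(1) by (simp_all add: \<epsilon>_def \<delta>_def)
    then have "\<epsilon> \<le> 1/2" using radius by linarith
    have "1 / \<epsilon> \<le> real n"
      using elim(1) assms(7) powr_mono[of \<alpha> 1 "real n"] by (simp add: \<epsilon>_def powr_minus divide_inverse)
    have "(1 + \<gamma>) * (1 - \<epsilon>) * (1 - 2 ^ (d + 1) * (2 * \<epsilon> + 2 * \<delta>)) \<le> (1 + \<gamma>) * (1 - \<epsilon>) * 1"
      using \<open>0 < \<epsilon>\<close> \<open>0 < \<delta>\<close> \<open>\<epsilon> \<le> 1/2\<close> assms(4) by (intro mult_left_mono) auto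
    then have "1 + \<gamma> / 2 \<le> (1 + \<gamma>) * (1 - \<epsilon>)"
      using kernel by linarith
    then have "S1 St w / ((1 + \<gamma>) * (1 - \<epsilon>)) \<le> S1 St w / (1 + \<gamma> / 2)"
      using assms(3,4) by (intro divide_left_mono) auto
    then have "1 / ((1 - \<epsilon>) * R) \<le> S1 St w / (1 + \<gamma> / 2)"
      by (simp add: R_def mult.commute)
    have "cmod (the_integral d St w \<alpha> \<beta> \<gamma> n)
        \<le> 10 ^ (d + 1) * (2 ^ (d - 1) * (1 + 2 * R * S1 St w) / (\<epsilon> * (\<gamma> / 2) * c) / ((1 - \<epsilon>) * R) ^ n)"
      using norm_the_integral_le[OF assms(1-4) elim(1) \<epsilon>_def \<delta>_def] assms(5) radius kernel
      by (simp add: R_def c_def)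
    also have "\<dots> = C * (1 / \<epsilon>) * (1 / ((1 - \<epsilon>) * R)) ^ n"
      by (simp add: C_def power_one_over)
    also have "\<dots> \<le> C * real n * (S1 St w / (1 + \<gamma> / 2)) ^ n"
      using \<open>1 / \<epsilon> \<le> real n\<close> \<open>1 / ((1 - \<epsilon>) * R) \<le> S1 St w / (1 + \<gamma> / 2)\<close>
        \<open>0 < \<epsilon>\<close> \<open>\<epsilon> \<le> 1/2\<close> \<open>0 < R\<close> assms(3) \<open>0 < c\<close> assms(4)
      by (intro mult_mono power_mono) (auto simp: C_def)
    finally show ?case using assms(3,4) by (simp add: mult.assoc)
  qed
  then show ?thesis by (rule bigoI)
qed

theorem mainTheorem3:
  fixes d :: nat and St :: "(nat \<Rightarrow> int) set" and w :: "(nat \<Rightarrow> int) \<Rightarrow> real"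
    and \<alpha> \<beta> :: real
  assumes "d \<ge> 1"
    and "valid_steps d St w"
    and "symmetric_steps d St w"
    and "all_directions d St"
    and "Apol d St w (\<lambda>_. 1) = Bpol d St w (\<lambda>_. 1)"
    and "1/2 < \<alpha>" and "\<alpha> < 2 * \<beta>" and "\<alpha> + \<beta> > 1" and "1/3 < \<beta>" and "\<beta> < 1/2"
  shows "\<exists>\<gamma>0>0. \<forall>\<gamma>. 0 < \<gamma> \<and> \<gamma> < \<gamma>0 \<longrightarrow>
           (\<exists>\<tau>. 0 < \<tau> \<and> \<tau> < S1 St w \<and>
              (\<lambda>n. cmod (the_integral d St w \<alpha> \<beta> \<gamma> n)) \<in> O(\<lambda>n. \<tau> ^ n))"
proof -
  have "0 < \<alpha>" "\<alpha> \<le> 1" "0 < \<beta>" using assms(6-10) by linarith+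
  have "d \<in> {1..d}" using assms(1) by simp
  then obtain i where "i \<in> St" "i d = 1"
    using assms(4) unfolding all_directions_def by blast
  then have top: "0 < layer_weight d St w 1" by (rule layer_weight_pos[OF assms(2)])
  have "0 < S1 St w"
    using S1_eq_sum_layer_weights[OF assms(2,1)] top layer_weight_nonneg[OF assms(2), of "-1"]
      layer_weight_nonneg[OF assms(2), of 0] by linarith
  show ?thesis
  proof (rule exI[of _ "layer_weight d St w 1 / S1 St w"], intro conjI allI impI)
    show "0 < layer_weight d St w 1 / S1 St w" using top \<open>0 < S1 St w\<close> by simp
    fix \<gamma> assume \<gamma>: "0 < \<gamma> \<and> \<gamma> < layer_weight d St w 1 / S1 St w"
    then have "(\<lambda>n. cmod (the_integral d St w \<alpha> \<beta> \<gamma> n)) \<in> O(\<lambda>n. real n * (S1 St w / (1 + \<gamma> / 2)) ^ n)"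
      using contraction_below_top_weight[OF assms(2,1)] \<open>0 < \<alpha>\<close> \<open>\<alpha> \<le> 1\<close> \<open>0 < \<beta>\<close>
      by (intro the_integral_bigo[OF assms(2,1) \<open>0 < S1 St w\<close>]) auto
    also have "(\<lambda>n. real n * (S1 St w / (1 + \<gamma> / 2)) ^ n) \<in> O(\<lambda>n. (S1 St w / (1 + \<gamma> / 4)) ^ n)"
      using \<gamma> \<open>0 < S1 St w\<close>
      by (intro landau_o.small_imp_big linear_times_geometric_smallo) (auto simp: field_simps)
    finally show "\<exists>\<tau>. 0 < \<tau> \<and> \<tau> < S1 St w \<and> (\<lambda>n. cmod (the_integral d St w \<alpha> \<beta> \<gamma> n)) \<in> O(\<lambda>n. \<tau> ^ n)"
      using \<gamma> \<open>0 < S1 St w\<close> by (intro exI[of _ "S1 St w / (1 + \<gamma> / 4)"]) (auto simp: field_simps)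
  qed
qed

end
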